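(* Let $G=(V,E)$ be a finite simple graph with vertex set $V=\{v_1,\dots,v_n\}$, let $O$ be an orientation of $G$ and let $D:E\to\mathbb{N}$ assign a positive integer strength to every edge, so that $(G,D,O)$ is an augmented orientation. Let $k$ be the maximum augmented in-degree of a vertex in $(G,D,O)$. If the number of even Eulerian structures in $(G,D,O)$ is different from the number of odd Eulerian structures in $(G,D,O)$, then \[ AT(G)-1=\alpha(f_G)\le \alpha(W_{G,D})\le k . \]
   Context: For a nonzero polynomial $Q$, $\alpha(Q)$ denotes the minimum $k$ such that some monomial $m$ occurring in $Q$ with nonzero coefficient satisfies $\deg(m)=\deg(Q)$ and every variable has degree at most $k$ in $m$. The graph polynomial of $G$ is $f_G(x_1,\dots,x_n)=\prod_{i<j,\ \{v_i,v_j\}\in E}(x_i-x_j)$, and the Alon–Tarsi number is $AT(G)=\alpha(f_G)+1$. An augmented orientation $(G,D,O)$ consists of a graph $G$, an orientation $O$ of $G$, and $D:E\to\mathbb{N}$ assigning positive strengths to edges; the augmented in-degree (resp. out-degree) of a vertex is the sum of the strengths of its incoming (resp. outgoing) edges. The augmented graph polynomial is $W_{G,D}(x_1,\dots,x_n)=\prod_{i<j,\ e=\{v_i,v_j\}\in E}(x_i^{D(e)}-x_j^{D(e)})$. An Eulerian structure in $(G,D,O)$ is a subgraph $F$ of $G$ without isolated vertices (the empty graph is allowed) such that every vertex of $F$ has augmented in-degree equal to its augmented out-degree in $F$, with the orientation and strengths restricted from $O$ and $D$. An Eulerian structure is even (odd) if its number of edges is even (odd). *)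

theory Defs
  imports "HOL-Library.Poly_Mapping"
begin

text \<open>Multivariate integer polynomials in variables x_0, x_1, ...:
  a monomial is a finitely supported exponent vector (nat =>0 nat),
  a polynomial is a finitely supported map from monomials to coefficients.\<close>

type_synonym mpoly = "(nat \<Rightarrow>\<^sub>0 nat) \<Rightarrow>\<^sub>0 int"

definition Var :: "nat \<Rightarrow> mpoly" where
  "Var i = Poly_Mapping.single (Poly_Mapping.single i 1) 1"

definition mon_deg :: "(nat \<Rightarrow>\<^sub>0 nat) \<Rightarrow> nat" where
  "mon_deg m = (\<Sum>i\<in>Poly_Mapping.keys m. Poly_Mapping.lookup m i)"

definition total_deg :: "mpoly \<Rightarrow> nat" where
  "total_deg Q = Max (mon_deg ` Poly_Mapping.keys Q)"

text \<open>alpha(Q): least k such that some monomial of Q of top degree has all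
  variable degrees at most k (meaningful for Q \<noteq> 0).\<close>
definition alpha :: "mpoly \<Rightarrow> nat" where
  "alpha Q = (LEAST k. \<exists>m\<in>Poly_Mapping.keys Q. mon_deg m = total_deg Q \<and> (\<forall>i. Poly_Mapping.lookup m i \<le> k))"

text \<open>Simple graphs on vertex set {0..<n} (vertex v_(i+1) is i), edges are 2-element sets.\<close>
definition simple_graph :: "nat \<Rightarrow> nat set set \<Rightarrow> bool" where
  "simple_graph n E \<longleftrightarrow> (\<forall>e\<in>E. \<exists>i j. e = {i, j} \<and> i \<noteq> j \<and> i < n \<and> j < n)"

definition graph_poly :: "nat set set \<Rightarrow> mpoly" where
  "graph_poly E = (\<Prod>e\<in>E. Var (Min e) - Var (Max e))"

definition AT :: "nat set set \<Rightarrow> nat" where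
  "AT E = alpha (graph_poly E) + 1"

definition aug_graph_poly :: "nat set set \<Rightarrow> (nat set \<Rightarrow> nat) \<Rightarrow> mpoly" where
  "aug_graph_poly E D = (\<Prod>e\<in>E. Var (Min e) ^ D e - Var (Max e) ^ D e)"

text \<open>An orientation Ori of E: a set of arcs (u,v) (meaning u \<rightarrow> v) such that every
  edge gets exactly one direction and every arc comes from an edge.\<close>
definition orientation :: "nat set set \<Rightarrow> (nat \<times> nat) set \<Rightarrow> bool" where
  "orientation E Ori \<longleftrightarrow> (\<forall>(u,v)\<in>Ori. {u,v} \<in> E) \<and>
     (\<forall>e\<in>E. \<exists>!a. a \<in> Ori \<and> e = {fst a, snd a})"

definition aug_orientation :: "nat \<Rightarrow> nat set set \<Rightarrow> (nat set \<Rightarrow> nat) \<Rightarrow> (nat \<times> nat) set \<Rightarrow> bool" where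
  "aug_orientation n E D Ori \<longleftrightarrow> simple_graph n E \<and> orientation E Ori \<and> (\<forall>e\<in>E. D e > 0)"

definition aug_indeg :: "nat set set \<Rightarrow> (nat set \<Rightarrow> nat) \<Rightarrow> (nat \<times> nat) set \<Rightarrow> nat \<Rightarrow> nat" where
  "aug_indeg F D Ori v = (\<Sum>a\<in>{a\<in>Ori. {fst a, snd a} \<in> F \<and> snd a = v}. D {fst a, snd a})"

definition aug_outdeg :: "nat set set \<Rightarrow> (nat set \<Rightarrow> nat) \<Rightarrow> (nat \<times> nat) set \<Rightarrow> nat \<Rightarrow> nat" where
  "aug_outdeg F D Ori v = (\<Sum>a\<in>{a\<in>Ori. {fst a, snd a} \<in> F \<and> fst a = v}. D {fst a, snd a})"

text \<open>Eulerian structure: a subgraph without isolated vertices, i.e. determined by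
  its edge set F \<subseteq> E (its vertices are the endpoints of F), such that every vertex
  of F has equal augmented in- and out-degree in F. Vertices not in F have both
  degrees 0, so the condition may be stated for all vertices.\<close>
definition eulerian_structure :: "nat \<Rightarrow> nat set set \<Rightarrow> (nat set \<Rightarrow> nat) \<Rightarrow> (nat \<times> nat) set \<Rightarrow> nat set set \<Rightarrow> bool" where
  "eulerian_structure n E D Ori F \<longleftrightarrow> F \<subseteq> E \<and>
     (\<forall>v\<in>\<Union>F. aug_indeg F D Ori v = aug_outdeg F D Ori v)"

definition num_even_ES :: "nat \<Rightarrow> nat set set \<Rightarrow> (nat set \<Rightarrow> nat) \<Rightarrow> (nat \<times> nat) set \<Rightarrow> nat" where
  "num_even_ES n E D Ori = card {F. eulerian_structure n E D Ori F \<and> even (card F)}"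

definition num_odd_ES :: "nat \<Rightarrow> nat set set \<Rightarrow> (nat set \<Rightarrow> nat) \<Rightarrow> (nat \<times> nat) set \<Rightarrow> nat" where
  "num_odd_ES n E D Ori = card {F. eulerian_structure n E D Ori F \<and> odd (card F)}"

end

theory Submission
  imports Defs
begin

text \<open>Up to sign, W = W_{G,D} is the product over the arcs (u,v) of O of (x_v^D - x_u^D).
  Expanding it, choosing the tail term on a set B of arcs yields the monomial formed by the
  out-degrees of B and the in-degrees of the remaining arcs; this is the in-degree monomial of O
  exactly when B is balanced, i.e. spans an Eulerian structure. Hence the coefficient of the
  in-degree monomial is +-(#even - #odd) \<noteq> 0. Since W is homogeneous, that monomial has top
  degree, and its exponents are at most k, so alpha(W) \<le> k. Finally f_G is homogeneous and
  divides W, so the top-degree monomial witnessing alpha(W) is a top-degree monomial of f_G plus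
  another monomial, whence alpha(f_G) \<le> alpha(W).\<close>

lemma mon_deg_add: "mon_deg (p + q) = mon_deg p + mon_deg q"
  unfolding mon_deg_def by (rule setsum_keys_plus_distrib) simp_all

lemma mon_deg_single: "mon_deg (Poly_Mapping.single i d) = d"
  by (simp add: mon_deg_def)

lemma lookup_le_mon_deg: "Poly_Mapping.lookup m i \<le> mon_deg m"
proof (cases "i \<in> Poly_Mapping.keys m")
  case True
  then show ?thesis unfolding mon_deg_def by (intro member_le_sum) simp_all
qed (simp add: in_keys_iff)

lemma Var_power: "Var i ^ d = Poly_Mapping.single (Poly_Mapping.single i d) 1"
  by (induction d) (simp_all add: Var_def mult_single flip: single_add)

lemma prod_single:
  "(\<Prod>a\<in>A. Poly_Mapping.single (f a) (c a) :: 'k::comm_monoid_add \<Rightarrow>\<^sub>0 'r::comm_semiring_1)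
     = Poly_Mapping.single (\<Sum>a\<in>A. f a) (\<Prod>a\<in>A. c a)"
  by (induction A rule: infinite_finite_induct) (simp_all add: mult_single)

definition homogeneous :: "nat \<Rightarrow> mpoly \<Rightarrow> bool" where
  "homogeneous d Q \<longleftrightarrow> (\<forall>m\<in>Poly_Mapping.keys Q. mon_deg m = d)"

lemma homogeneous_one: "homogeneous 0 1"
  by (simp add: homogeneous_def mon_deg_def)

lemma homogeneous_mult:
  assumes "homogeneous d p" "homogeneous e q"
  shows "homogeneous (d + e) (p * q)"
  using assms keys_mult[of p q] unfolding homogeneous_def by (force simp: mon_deg_add)

lemma homogeneous_prod:
  "(\<And>a. a \<in> A \<Longrightarrow> homogeneous (d a) (f a)) \<Longrightarrow> homogeneous (\<Sum>a\<in>A. d a) (\<Prod>a\<in>A. f a)"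
  by (induction A rule: infinite_finite_induct) (simp_all add: homogeneous_one homogeneous_mult)

lemma homogeneous_diff: "homogeneous d p \<Longrightarrow> homogeneous d q \<Longrightarrow> homogeneous d (p - q)"
  using keys_diff[of p q] unfolding homogeneous_def by blast

lemma homogeneous_Var_power: "homogeneous d (Var i ^ d)"
  by (simp add: homogeneous_def Var_power mon_deg_single)

lemma homogeneous_aug_graph_poly: "homogeneous (\<Sum>e\<in>E. D e) (aug_graph_poly E D)"
  unfolding aug_graph_poly_def
  by (intro homogeneous_prod homogeneous_diff homogeneous_Var_power)

lemma homogeneous_graph_poly: "homogeneous (card E) (graph_poly E)"
  using homogeneous_aug_graph_poly[where D="\<lambda>_. 1"]
  by (simp add: graph_poly_def aug_graph_poly_def)

lemma total_deg_homogeneous: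
  assumes "homogeneous d Q" "Q \<noteq> 0"
  shows "total_deg Q = d"
proof -
  have "mon_deg ` Poly_Mapping.keys Q = {d}"
    using assms unfolding homogeneous_def by (auto simp flip: keys_eq_empty)
  then show ?thesis by (simp add: total_deg_def)
qed

lemma alpha_le:
  assumes "m \<in> Poly_Mapping.keys Q" "mon_deg m = total_deg Q" "\<And>i. Poly_Mapping.lookup m i \<le> k"
  shows "alpha Q \<le> k"
  unfolding alpha_def by (rule Least_le) (use assms in blast)

lemma alpha_le_homogeneous:
  assumes "homogeneous d Q" "m \<in> Poly_Mapping.keys Q" "\<And>i. Poly_Mapping.lookup m i \<le> k"
  shows "alpha Q \<le> k"
proof (rule alpha_le[OF assms(2) _ assms(3)])
  have "Q \<noteq> 0" using assms(2) by auto
  then show "mon_deg m = total_deg Q"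
    using assms(1,2) total_deg_homogeneous[OF assms(1)] by (simp add: homogeneous_def)
qed

lemma alpha_witness:
  assumes "Q \<noteq> 0"
  obtains m where "m \<in> Poly_Mapping.keys Q" "mon_deg m = total_deg Q"
    "\<And>i. Poly_Mapping.lookup m i \<le> alpha Q"
proof -
  let ?witness = "\<lambda>k. \<exists>m\<in>Poly_Mapping.keys Q. mon_deg m = total_deg Q \<and>
    (\<forall>i. Poly_Mapping.lookup m i \<le> k)"
  have "total_deg Q \<in> mon_deg ` Poly_Mapping.keys Q"
    unfolding total_deg_def using assms by (intro Max_in) auto
  then have "?witness (total_deg Q)"
    using lookup_le_mon_deg by fastforce
  then have "?witness (alpha Q)"
    unfolding alpha_def by (rule LeastI)
  then show ?thesis using that by blast
qed

lemma alpha_dvd_le: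
  assumes "homogeneous d P" "P dvd Q" "Q \<noteq> 0"
  shows "alpha P \<le> alpha Q"
proof -
  obtain m where m: "m \<in> Poly_Mapping.keys Q" "\<And>i. Poly_Mapping.lookup m i \<le> alpha Q"
    using alpha_witness[OF assms(3)] by blast
  obtain R where "Q = P * R" using assms(2) by blast
  then obtain a b where "m = a + b" "a \<in> Poly_Mapping.keys P"
    using m(1) keys_mult[of P R] by blast
  moreover have "Poly_Mapping.lookup a i \<le> alpha Q" for i
    using m(2)[of i] \<open>m = a + b\<close> by (simp add: lookup_add)
  ultimately show ?thesis
    using alpha_le_homogeneous[OF assms(1)] by blast
qed

lemma graph_poly_dvd_aug_graph_poly: "graph_poly E dvd aug_graph_poly E D"
  unfolding graph_poly_def aug_graph_poly_def
  by (intro prod_dvd_prod dvdI) (rule power_diff_sumr2)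

lemma prod_eq_or_eq_neg:
  fixes f g :: "'a \<Rightarrow> 'r::comm_ring_1"
  assumes "\<And>a. a \<in> A \<Longrightarrow> f a = g a \<or> f a = - g a"
  shows "prod f A = prod g A \<or> prod f A = - prod g A"
  using assms
proof (induction A rule: infinite_finite_induct)
  case (insert a A)
  then have "f a = g a \<or> f a = - g a" "prod f A = prod g A \<or> prod f A = - prod g A"
    by auto
  then show ?case using insert.hyps by auto
qed simp_all

lemma sum_neg_one_power_card:
  assumes "finite S"
  shows "(\<Sum>F\<in>S. (-1::int) ^ card F)
    = int (card {F\<in>S. even (card F)}) - int (card {F\<in>S. odd (card F)})"
proof -
  have "(\<Sum>F\<in>S. (-1::int) ^ card F) = (\<Sum>F\<in>S. if even (card F) then 1 else - 1)"
    by (intro sum.cong) auto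
  also have "\<dots> = int (card (S \<inter> {F. even (card F)})) - int (card (S \<inter> - {F. even (card F)}))"
    by (simp add: sum.If_cases[OF assms])
  finally show ?thesis by (simp add: Collect_conj_eq Int_commute Compl_eq)
qed

definition arc_poly :: "(nat \<times> nat) set \<Rightarrow> (nat \<times> nat \<Rightarrow> nat) \<Rightarrow> mpoly" where
  "arc_poly A w = (\<Prod>a\<in>A. Var (snd a) ^ w a - Var (fst a) ^ w a)"

definition indeg_monomial :: "(nat \<times> nat) set \<Rightarrow> (nat \<times> nat \<Rightarrow> nat) \<Rightarrow> nat \<Rightarrow>\<^sub>0 nat" where
  "indeg_monomial A w = (\<Sum>a\<in>A. Poly_Mapping.single (snd a) (w a))"

definition outdeg_monomial :: "(nat \<times> nat) set \<Rightarrow> (nat \<times> nat \<Rightarrow> nat) \<Rightarrow> nat \<Rightarrow>\<^sub>0 nat" where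
  "outdeg_monomial A w = (\<Sum>a\<in>A. Poly_Mapping.single (fst a) (w a))"

definition balanced :: "(nat \<times> nat) set \<Rightarrow> (nat \<times> nat \<Rightarrow> nat) \<Rightarrow> bool" where
  "balanced A w \<longleftrightarrow> outdeg_monomial A w = indeg_monomial A w"

lemma lookup_indeg_monomial:
  "finite A \<Longrightarrow> Poly_Mapping.lookup (indeg_monomial A w) v = (\<Sum>a\<in>{a\<in>A. snd a = v}. w a)"
  by (simp add: indeg_monomial_def lookup_sum lookup_single when_def sum.inter_filter)

lemma lookup_outdeg_monomial:
  "finite A \<Longrightarrow> Poly_Mapping.lookup (outdeg_monomial A w) v = (\<Sum>a\<in>{a\<in>A. fst a = v}. w a)"
  by (simp add: outdeg_monomial_def lookup_sum lookup_single when_def sum.inter_filter)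

lemma arc_poly_expand:
  assumes "finite A"
  shows "arc_poly A w = (\<Sum>B\<in>Pow A.
    Poly_Mapping.single (outdeg_monomial B w + indeg_monomial (A - B) w) ((-1) ^ card B))"
proof -
  have "arc_poly A w = (\<Prod>a\<in>A. Poly_Mapping.single (Poly_Mapping.single (fst a) (w a)) (-1)
      + Poly_Mapping.single (Poly_Mapping.single (snd a) (w a)) 1)"
    unfolding arc_poly_def Var_power by (simp add: single_uminus)
  also have "\<dots> = (\<Sum>B\<in>Pow A. (\<Prod>a\<in>B. Poly_Mapping.single (Poly_Mapping.single (fst a) (w a)) (-1))
      * (\<Prod>a\<in>A - B. Poly_Mapping.single (Poly_Mapping.single (snd a) (w a)) 1))"
    by (rule prod_add[OF assms])
  also have "\<dots> = (\<Sum>B\<in>Pow A.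
      Poly_Mapping.single (outdeg_monomial B w + indeg_monomial (A - B) w) ((-1) ^ card B))"
    by (simp add: prod_single mult_single outdeg_monomial_def indeg_monomial_def)
  finally show ?thesis .
qed

lemma lookup_arc_poly_indeg_monomial:
  assumes "finite A"
  shows "Poly_Mapping.lookup (arc_poly A w) (indeg_monomial A w)
    = (\<Sum>B\<in>{B\<in>Pow A. balanced B w}. (-1) ^ card B)"
proof -
  have "outdeg_monomial B w + indeg_monomial (A - B) w = indeg_monomial A w \<longleftrightarrow> balanced B w"
    if "B \<subseteq> A" for B
  proof -
    have "indeg_monomial A w = indeg_monomial B w + indeg_monomial (A - B) w"
      unfolding indeg_monomial_def using sum.subset_diff[OF that assms] by (simp add: add.commute)
    then show ?thesis by (simp add: balanced_def)
  qed
  then have "Poly_Mapping.lookup (arc_poly A w) (indeg_monomial A w)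
      = (\<Sum>B\<in>Pow A. if balanced B w then (-1) ^ card B else 0)"
    unfolding arc_poly_expand[OF assms] lookup_sum lookup_single
    by (intro sum.cong) (auto simp: when_def)
  also have "\<dots> = (\<Sum>B\<in>{B\<in>Pow A. balanced B w}. (-1) ^ card B)"
    by (rule sum.inter_filter[symmetric]) (simp add: assms)
  finally show ?thesis .
qed

abbreviation edge_of :: "nat \<times> nat \<Rightarrow> nat set" where
  "edge_of a \<equiv> {fst a, snd a}"

lemma simple_graph_finite: "simple_graph n E \<Longrightarrow> finite E"
  unfolding simple_graph_def by (rule finite_subset[of _ "Pow {..<n}"]) auto

lemma simple_graph_edge:
  assumes "simple_graph n E" "{u, v} \<in> E"
  shows "u \<noteq> v" "u < n" "v < n"
proof -
  obtain i j where "{u, v} = {i, j}" "i \<noteq> j" "i < n" "j < n"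
    using assms unfolding simple_graph_def by blast
  then show "u \<noteq> v" "u < n" "v < n"
    unfolding doubleton_eq_iff by auto
qed

lemma orientation_bij_betw:
  assumes "orientation E Ori"
  shows "bij_betw edge_of Ori E"
proof (rule bij_betw_imageI)
  have arcs: "\<And>a. a \<in> Ori \<Longrightarrow> edge_of a \<in> E"
    and unique: "\<And>e. e \<in> E \<Longrightarrow> \<exists>!a. a \<in> Ori \<and> e = edge_of a"
    using assms unfolding orientation_def by auto
  show "inj_on edge_of Ori"
  proof (rule inj_onI)
    fix a b assume "a \<in> Ori" "b \<in> Ori" "edge_of a = edge_of b"
    then have "a \<in> Ori \<and> edge_of a = edge_of a" "b \<in> Ori \<and> edge_of a = edge_of b" by simp_all
    with unique[OF arcs[OF \<open>a \<in> Ori\<close>]] show "a = b" by (metis ex1E)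
  qed
  show "edge_of ` Ori = E"
    using arcs unique by blast
qed

lemma orientation_arc_neq:
  assumes "simple_graph n E" "orientation E Ori" "a \<in> Ori"
  shows "fst a \<noteq> snd a"
  using bij_betw_apply[OF orientation_bij_betw[OF assms(2)] assms(3)]
  by (rule simple_graph_edge(1)[OF assms(1)])

lemma aug_graph_poly_eq_arc_poly:
  assumes "simple_graph n E" "orientation E Ori"
  shows "aug_graph_poly E D = arc_poly Ori (\<lambda>a. D (edge_of a)) \<or>
    aug_graph_poly E D = - arc_poly Ori (\<lambda>a. D (edge_of a))"
proof -
  have "aug_graph_poly E D =
      (\<Prod>a\<in>Ori. Var (Min (edge_of a)) ^ D (edge_of a) - Var (Max (edge_of a)) ^ D (edge_of a))"
    unfolding aug_graph_poly_def using orientation_bij_betw[OF assms(2)]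
    by (rule prod.reindex_bij_betw[symmetric])
  then show ?thesis
    unfolding arc_poly_def using orientation_arc_neq[OF assms]
    by (simp only:, intro prod_eq_or_eq_neg) (auto simp: min_def max_def)
qed

lemma aug_degrees_image:
  assumes "orientation E Ori" "B \<subseteq> Ori"
  shows "aug_indeg (edge_of ` B) D Ori v = (\<Sum>a\<in>{a\<in>B. snd a = v}. D (edge_of a))"
    and "aug_outdeg (edge_of ` B) D Ori v = (\<Sum>a\<in>{a\<in>B. fst a = v}. D (edge_of a))"
proof -
  have "inj_on edge_of Ori"
    using orientation_bij_betw[OF assms(1)] by (rule bij_betw_imp_inj_on)
  then have "{a\<in>Ori. edge_of a \<in> edge_of ` B \<and> P a} = {a\<in>B. P a}" for P
    using inj_on_image_mem_iff[OF _ _ assms(2)] assms(2) by blast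
  then show "aug_indeg (edge_of ` B) D Ori v = (\<Sum>a\<in>{a\<in>B. snd a = v}. D (edge_of a))"
    and "aug_outdeg (edge_of ` B) D Ori v = (\<Sum>a\<in>{a\<in>B. fst a = v}. D (edge_of a))"
    unfolding aug_indeg_def aug_outdeg_def by simp_all
qed

lemma eulerian_structure_image_iff:
  assumes "orientation E Ori" "finite Ori" "B \<subseteq> Ori"
  shows "eulerian_structure n E D Ori (edge_of ` B) \<longleftrightarrow> balanced B (\<lambda>a. D (edge_of a))"
proof -
  let ?out = "\<lambda>v. \<Sum>a\<in>{a\<in>B. fst a = v}. D (edge_of a)"
  let ?in = "\<lambda>v. \<Sum>a\<in>{a\<in>B. snd a = v}. D (edge_of a)"
  have fin: "finite B" using assms(2,3) by (rule rev_finite_subset)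
  have sub: "edge_of ` B \<subseteq> E"
    using assms(3) bij_betw_imp_surj_on[OF orientation_bij_betw[OF assms(1)]] by blast
  have outside: "?out v = ?in v" if "v \<notin> \<Union>(edge_of ` B)" for v
  proof -
    have empty: "{a\<in>B. fst a = v} = {}" "{a\<in>B. snd a = v} = {}"
      using that by auto
    show ?thesis unfolding empty by simp
  qed
  then have "(\<forall>v\<in>\<Union>(edge_of ` B). ?out v = ?in v) \<longleftrightarrow> (\<forall>v. ?out v = ?in v)"
    by blast
  moreover have "eulerian_structure n E D Ori (edge_of ` B) \<longleftrightarrow>
      (\<forall>v\<in>\<Union>(edge_of ` B). ?out v = ?in v)"
    unfolding eulerian_structure_def aug_degrees_image[OF assms(1,3)] using sub by (simp add: eq_commute)
  moreover have "balanced B (\<lambda>a. D (edge_of a)) \<longleftrightarrow> (\<forall>v. ?out v = ?in v)"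
    unfolding balanced_def poly_mapping_eq_iff fun_eq_iff
      lookup_indeg_monomial[OF fin] lookup_outdeg_monomial[OF fin] ..
  ultimately show ?thesis by simp
qed

lemma signed_count_balanced:
  assumes "orientation E Ori" "finite Ori"
  shows "(\<Sum>B\<in>{B\<in>Pow Ori. balanced B (\<lambda>a. D (edge_of a))}. (-1::int) ^ card B)
    = int (num_even_ES n E D Ori) - int (num_odd_ES n E D Ori)"
proof -
  let ?ES = "{F\<in>Pow E. eulerian_structure n E D Ori F}"
  have bij: "bij_betw edge_of Ori E" by (rule orientation_bij_betw[OF assms(1)])
  have bij_ES: "bij_betw (image edge_of) {B\<in>Pow Ori. balanced B (\<lambda>a. D (edge_of a))} ?ES"
    using bij_betw_image_Pow[OF bij] eulerian_structure_image_iff[OF assms]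
    by (rule bij_betw_Collect) simp
  have "finite ?ES"
    using bij_betw_finite[OF bij] assms(2) by simp
  have "(\<Sum>B\<in>{B\<in>Pow Ori. balanced B (\<lambda>a. D (edge_of a))}. (-1::int) ^ card B)
      = (\<Sum>B\<in>{B\<in>Pow Ori. balanced B (\<lambda>a. D (edge_of a))}. (-1) ^ card (edge_of ` B))"
    using inj_on_subset[OF bij_betw_imp_inj_on[OF bij]] by (intro sum.cong) (simp_all add: card_image)
  also have "\<dots> = (\<Sum>F\<in>?ES. (-1) ^ card F)"
    by (rule sum.reindex_bij_betw[OF bij_ES])
  also have "\<dots> = int (num_even_ES n E D Ori) - int (num_odd_ES n E D Ori)"
    unfolding sum_neg_one_power_card[OF \<open>finite ?ES\<close>] num_even_ES_def num_odd_ES_def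
    by (simp add: eulerian_structure_def conj_ac)
  finally show ?thesis .
qed

lemma aug_indeg_le_Max:
  assumes "simple_graph n E" "orientation E Ori"
  shows "aug_indeg E D Ori v \<le> Max (aug_indeg E D Ori ` {..<n})"
proof (cases "v < n")
  case False
  have "{a\<in>Ori. edge_of a \<in> E \<and> snd a = v} = {}"
    using simple_graph_edge(3)[OF assms(1)] False by fastforce
  then have "aug_indeg E D Ori v = 0"
    unfolding aug_indeg_def by (simp only: sum.empty)
  then show ?thesis by simp
qed (intro Max_ge; simp)

theorem lemma2p7:
  fixes n :: nat and E :: "nat set set" and D :: "nat set \<Rightarrow> nat" and Ori :: "(nat \<times> nat) set"
    and k :: nat
  assumes "aug_orientation n E D Ori"
    and "k = Max ((\<lambda>v. aug_indeg E D Ori v) ` {..<n})"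
    and "num_even_ES n E D Ori \<noteq> num_odd_ES n E D Ori"
  shows "AT E - 1 = alpha (graph_poly E) \<and>
         alpha (graph_poly E) \<le> alpha (aug_graph_poly E D) \<and>
         alpha (aug_graph_poly E D) \<le> k"
proof -
  let ?W = "aug_graph_poly E D" and ?w = "\<lambda>a. D (edge_of a)"
  have G: "simple_graph n E" "orientation E Ori"
    using assms(1) by (simp_all add: aug_orientation_def)
  have fin: "finite Ori"
    using bij_betw_finite[OF orientation_bij_betw[OF G(2)]] simple_graph_finite[OF G(1)] by simp
  have "Poly_Mapping.lookup (arc_poly Ori ?w) (indeg_monomial Ori ?w) \<noteq> 0"
    unfolding lookup_arc_poly_indeg_monomial[OF fin] signed_count_balanced[OF G(2) fin, where n=n]
    using assms(3) by simp
  then have key: "indeg_monomial Ori ?w \<in> Poly_Mapping.keys ?W"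
    using aug_graph_poly_eq_arc_poly[OF G, of D] by (auto simp: in_keys_iff)
  have "Poly_Mapping.lookup (indeg_monomial Ori ?w) v \<le> k" for v
    using aug_degrees_image(1)[OF G(2) order_refl, of D v] aug_indeg_le_Max[OF G, of D v]
      bij_betw_imp_surj_on[OF orientation_bij_betw[OF G(2)]]
    by (simp add: lookup_indeg_monomial[OF fin] assms(2))
  then have "alpha ?W \<le> k"
    by (rule alpha_le_homogeneous[OF homogeneous_aug_graph_poly key])
  moreover have "alpha (graph_poly E) \<le> alpha ?W"
    using key by (intro alpha_dvd_le[OF homogeneous_graph_poly graph_poly_dvd_aug_graph_poly]) auto
  ultimately show ?thesis by (simp add: AT_def)
qed

end
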